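(* Let $p$ be a prime and $d>1$. Let $h^{\mathrm u}_{p,d}$ (resp. $h^{\mathrm l}_{p,d}$) be the number of unitary equivalence classes of frames $\Phi_J$ with $J\subset\mathbb{Z}_p$ a $d$-element subset with $0\notin J$ (resp. $0\in J$). Then $$h^{\mathrm u}_{p,d}=\frac{1}{p-1}\sum_{j\mid\gcd(p-1,d)}\binom{(p-1)/j}{d/j}\varphi(j),\qquad h^{\mathrm l}_{p,d}=\frac{1}{p-1}\sum_{j\mid\gcd(p-1,d-1)}\binom{(p-1)/j}{(d-1)/j}\varphi(j),$$ where $\varphi$ is Euler's totient function. (The formula for $h^{\mathrm u}_{p,d}$ also holds for $d=1$.)
   Context: Let $\omega=e^{2\pi i/p}$. For a $d$-element subset $J\subset\mathbb{Z}_p$, the cyclic harmonic frame $\Phi_J$ is the sequence $(v_k)_{k\in\mathbb{Z}_p}$ with $v_k=(\omega^{jk})_{j\in J}\in\mathbb{C}^J\cong\mathbb{C}^d$. Two finite sequences $(v_k)_{k\in I}$, $(w_k)_{k\in I'}$ in $\mathbb{C}^d$ are unitarily equivalent if there is a unitary $U$ and a bijection $\sigma:I\to I'$ with $v_k=Uw_{\sigma(k)}$ for all $k$. Frames $\Phi_J$ with $0\in J$ are called lifted, those with $0\notin J$ unlifted. *)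

theory Defs
  imports Complex_Main "HOL-Number_Theory.Number_Theory"
begin

text \<open>Z_p is represented by {0..<p}; omega = exp(2 pi i / p).\<close>
definition omega :: "nat \<Rightarrow> complex" where
  "omega p = cis (2 * pi / real p)"

text \<open>Cyclic harmonic frame Phi_J: the vector v_k (k in Z_p) lives in C^J, which is
  identified with C^d (d = card J) via the increasing enumeration of J; a vector of C^d
  is a function nat => complex whose entries i < d are the coordinates.\<close>
definition harm_frame :: "nat \<Rightarrow> nat set \<Rightarrow> nat \<Rightarrow> nat \<Rightarrow> complex" where
  "harm_frame p J k i = omega p ^ (sorted_list_of_set J ! i * k)"

definition unitary_mat :: "nat \<Rightarrow> (nat \<Rightarrow> nat \<Rightarrow> complex) \<Rightarrow> bool" where
  "unitary_mat d U \<longleftrightarrow>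
     (\<forall>i<d. \<forall>l<d. (\<Sum>m<d. cnj (U m i) * U m l) = (if i = l then 1 else 0))"

definition unit_equiv ::
  "nat \<Rightarrow> nat set \<Rightarrow> (nat \<Rightarrow> nat \<Rightarrow> complex) \<Rightarrow> nat set \<Rightarrow> (nat \<Rightarrow> nat \<Rightarrow> complex) \<Rightarrow> bool" where
  "unit_equiv d I v I' w \<longleftrightarrow>
     (\<exists>U \<sigma>. unitary_mat d U \<and> bij_betw \<sigma> I I' \<and>
        (\<forall>k\<in>I. \<forall>i<d. v k i = (\<Sum>l<d. U i l * w (\<sigma> k) l)))"

definition num_classes :: "nat \<Rightarrow> nat \<Rightarrow> nat set set \<Rightarrow> nat" where
  "num_classes p d S = card (S // {(J, K). J \<in> S \<and> K \<in> S \<and>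
      unit_equiv d {..<p} (harm_frame p J) {..<p} (harm_frame p K)})"

definition unlifted_sets :: "nat \<Rightarrow> nat \<Rightarrow> nat set set" where
  "unlifted_sets p d = {J. J \<subseteq> {..<p} \<and> card J = d \<and> 0 \<notin> J}"

definition lifted_sets :: "nat \<Rightarrow> nat \<Rightarrow> nat set set" where
  "lifted_sets p d = {J. J \<subseteq> {..<p} \<and> card J = d \<and> 0 \<in> J}"

end

theory Submission
  imports Defs "HOL-Computational_Algebra.Polynomial" "HOL-Algebra.Group_Action"
begin

text \<open>Two frames \<open>\<Phi>\<^sub>J\<close>, \<open>\<Phi>\<^sub>K\<close> of the same kind (lifted or unlifted) are unitarily equivalent
  exactly when \<open>K = a J\<close> for a unit \<open>a\<close> of \<open>\<int>\<^sub>p\<close>. If \<open>K = a J\<close>, a permutation matrix together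
  with the reindexing \<open>k \<mapsto> a\<^sup>-\<^sup>1 k\<close> of the frame vectors is an equivalence. Conversely, a unitary
  preserves inner products, so \<open>\<langle>v\<^sub>1, v\<^sub>0\<rangle> = \<Sum>\<^sub>j\<^sub>\<in>\<^sub>J \<omega>\<^sup>j\<close> equals \<open>\<Sum>\<^sub>j\<^sub>\<in>\<^sub>K \<omega>\<^sup>m\<^sup>j\<close> for some unit \<open>m\<close>;
  as \<open>\<omega>, \<dots>, \<omega>\<^sup>p\<^sup>-\<^sup>1\<close> are linearly independent over \<open>\<int>\<close> (Eisenstein's criterion for
  \<open>\<Phi>\<^sub>p(x + 1)\<close>), this forces \<open>J = m K\<close>.

  Hence the classes are the orbits of \<open>\<int>\<^sub>p\<^sup>\<times>\<close> acting on \<open>d\<close>-sets by dilation, counted by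
  Burnside's lemma: a unit of order \<open>j\<close> fixes exactly the unions of cosets of its cyclic subgroup
  inside \<open>\<int>\<^sub>p\<^sup>\<times>\<close>, of which there are \<open>((p-1)/j choose d/j)\<close> if \<open>j\<close> divides \<open>d\<close>. Each divisor \<open>j\<close>
  of \<open>p - 1\<close> is the order of \<open>\<phi>(j)\<close> units. Lifted \<open>d\<close>-sets correspond to unlifted
  \<open>(d - 1)\<close>-sets by removing \<open>0\<close>.\<close>

section \<open>Roots of unity of prime order\<close>

lemma map_poly_of_int_add:
  "map_poly of_int (f + g) = (map_poly of_int f + map_poly of_int g :: 'a :: comm_ring_1 poly)"
  by (simp add: poly_eq_iff coeff_map_poly)

lemma map_poly_of_int_mult:
  "map_poly of_int (f * g) = (map_poly of_int f * map_poly of_int g :: 'a :: comm_ring_1 poly)"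
  by (simp add: poly_eq_iff coeff_mult coeff_map_poly)

lemma map_poly_of_int_smult:
  "map_poly of_int (smult c f) = (smult (of_int c) (map_poly of_int f) :: 'a :: comm_ring_1 poly)"
  by (simp add: poly_eq_iff coeff_map_poly)

lemma map_poly_of_int_const: "map_poly of_int [:c:] = ([:of_int c:] :: 'a :: comm_ring_1 poly)"
  by (simp add: poly_eq_iff coeff_map_poly coeff_pCons split: nat.split)

lemma map_poly_of_int_sum:
  "map_poly of_int (sum f A) = (\<Sum>x\<in>A. map_poly of_int (f x) :: 'a :: comm_ring_1 poly)"
  by (induction A rule: infinite_finite_induct) (auto simp: map_poly_of_int_add)

lemma poly_map_poly_of_int_pcompose:
  "poly (map_poly of_int (pcompose f g)) (z :: 'a :: comm_ring_1) =
     poly (map_poly of_int f) (poly (map_poly of_int g) z)"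
proof (induction f)
  case (pCons a f)
  have "map_poly of_int (pCons a f) = (pCons (of_int a) (map_poly of_int f) :: 'a poly)"
    by (simp add: poly_eq_iff coeff_map_poly coeff_pCons split: nat.split)
  with pCons show ?case
    by (simp add: pcompose_pCons map_poly_of_int_add map_poly_of_int_mult map_poly_of_int_const)
qed simp

lemma eisenstein_factor_degree:
  fixes F G :: "'a :: idom poly"
  assumes "prime_elem q" "q dvd coeff F 0" "\<not> q dvd coeff G 0" "\<not> q dvd lead_coeff F"
    and "\<forall>k < degree (F * G). q dvd coeff (F * G) k"
  shows "degree (F * G) \<le> degree F"
proof (rule ccontr)
  define r where "r = (LEAST i. \<not> q dvd coeff F i)"
  have r: "\<not> q dvd coeff F r" unfolding r_def by (rule LeastI[of _ "degree F"]) (use assms in auto)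
  have below_r: "q dvd coeff F i" if "i < r" for i using not_less_Least[OF that[unfolded r_def]] by auto
  have "r \<le> degree F" unfolding r_def by (rule Least_le) (use assms in auto)
  moreover assume "\<not> degree (F * G) \<le> degree F"
  ultimately have "q dvd coeff (F * G) r" using assms(5) by auto
  moreover have "coeff (F * G) r = (\<Sum>i<r. coeff F i * coeff G (r - i)) + coeff F r * coeff G 0"
    by (simp add: coeff_mult lessThan_Suc_atMost[symmetric])
  moreover have "q dvd (\<Sum>i<r. coeff F i * coeff G (r - i))"
    by (intro dvd_sum) (auto intro: below_r dvd_mult2)
  ultimately have "q dvd coeff F r * coeff G 0" by (metis dvd_add_right_iff)
  with r assms(1,3) show False by (simp add: prime_elem_dvd_mult_iff)
qed

theorem eisenstein_criterion:
  fixes F G :: "'a :: idom poly"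
  assumes "prime_elem q" "\<forall>k < degree (F * G). q dvd coeff (F * G) k"
    and "\<not> q dvd lead_coeff (F * G)" "\<not> q ^ 2 dvd coeff (F * G) 0"
  shows "degree F = 0 \<or> degree G = 0"
proof -
  have "F * G \<noteq> 0" using assms(3) by auto
  then have deg: "degree (F * G) = degree F + degree G" by (simp add: degree_mult_eq)
  have lead: "\<not> q dvd lead_coeff F" "\<not> q dvd lead_coeff G"
    using assms(3) by (auto simp: lead_coeff_mult)
  show ?thesis
  proof (cases "degree (F * G) = 0")
    case False
    then have "q dvd coeff (F * G) 0" using assms(2) by auto
    then have "q dvd coeff F 0 \<or> q dvd coeff G 0"
      using assms(1) by (simp add: coeff_mult_0 prime_elem_dvd_mult_iff)
    moreover have "\<not> (q dvd coeff F 0 \<and> q dvd coeff G 0)"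
      using assms(4) by (auto simp: coeff_mult_0 power2_eq_square mult_dvd_mono)
    ultimately consider "q dvd coeff F 0" "\<not> q dvd coeff G 0" | "q dvd coeff G 0" "\<not> q dvd coeff F 0"
      by blast
    then show ?thesis
    proof cases
      case 1
      then show ?thesis using eisenstein_factor_degree[OF assms(1) 1 lead(1)] assms(2) deg by simp
    next
      case 2
      then show ?thesis using eisenstein_factor_degree[OF assms(1) 2 lead(2)] assms(2) deg
        by (simp add: mult.commute)
    qed
  qed (use deg in simp)
qed

text \<open>\<open>((x + 1)\<^sup>p - 1) / x\<close>, which is \<open>\<Phi>\<^sub>p(x + 1)\<close> for prime \<open>p\<close>.\<close>
definition shifted_cyclotomic :: "nat \<Rightarrow> int poly" where
  "shifted_cyclotomic p = (\<Sum>k<p. monom (int (p choose Suc k)) k)"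

lemma coeff_shifted_cyclotomic:
  "coeff (shifted_cyclotomic p) k = (if k < p then int (p choose Suc k) else 0)"
  by (simp add: shifted_cyclotomic_def coeff_sum coeff_monom)

lemma degree_shifted_cyclotomic: "p \<ge> 1 \<Longrightarrow> degree (shifted_cyclotomic p) = p - 1"
  by (intro antisym degree_le le_degree) (auto simp: coeff_shifted_cyclotomic)

lemma lead_coeff_shifted_cyclotomic: "p \<ge> 1 \<Longrightarrow> lead_coeff (shifted_cyclotomic p) = 1"
  by (simp add: degree_shifted_cyclotomic coeff_shifted_cyclotomic)

lemma content_shifted_cyclotomic:
  assumes "p \<ge> 1" shows "content (shifted_cyclotomic p) = 1"
proof -
  have "content (shifted_cyclotomic p) dvd coeff (shifted_cyclotomic p) (p - 1)"
    by (rule content_dvd_coeff)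
  moreover have "content (shifted_cyclotomic p) \<ge> 0"
    by (metis normalize_content abs_ge_zero normalize_int_def)
  ultimately show ?thesis using assms by (simp add: coeff_shifted_cyclotomic)
qed

lemma poly_shifted_cyclotomic_root:
  fixes z :: "'a :: idom"
  assumes "p \<ge> 1" "z ^ p = 1" "z \<noteq> 1"
  shows "poly (map_poly of_int (shifted_cyclotomic p)) (z - 1) = 0"
proof -
  obtain n where n: "p = Suc n" using assms(1) by (cases p) auto
  define x where "x = z - 1"
  have poly_eq: "poly (map_poly of_int (shifted_cyclotomic p)) x = (\<Sum>i\<le>n. of_nat (p choose Suc i) * x ^ i)"
    by (simp add: shifted_cyclotomic_def map_poly_of_int_sum poly_sum map_poly_monom poly_monom
        n lessThan_Suc_atMost)
  have "(x + 1) ^ p = (\<Sum>k\<le>p. of_nat (p choose k) * x ^ k)"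
    by (simp add: binomial_ring)
  also have "\<dots> = 1 + x * (\<Sum>i\<le>n. of_nat (p choose Suc i) * x ^ i)"
    unfolding n by (subst sum.atMost_Suc_shift) (simp add: sum_distrib_left mult_ac del: binomial_Suc_Suc)
  also have "\<dots> = 1 + x * poly (map_poly of_int (shifted_cyclotomic p)) x"
    by (simp only: poly_eq)
  finally have "x * poly (map_poly of_int (shifted_cyclotomic p)) x = 0"
    using assms(2) x_def by simp
  then show ?thesis using assms(3) x_def by simp
qed

lemma shifted_cyclotomic_factor_degree:
  assumes "prime p" "shifted_cyclotomic p = F * G"
  shows "degree F = 0 \<or> degree G = 0"
proof (rule eisenstein_criterion[of "int p"])
  have p1: "p \<ge> 1" using assms(1) prime_ge_1_nat by blast
  show "prime_elem (int p)" using assms(1) by simp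
  show "\<forall>k < degree (F * G). int p dvd coeff (F * G) k"
    using assms p1 by (auto simp: degree_shifted_cyclotomic coeff_shifted_cyclotomic
        simp flip: assms(2) intro!: dvd_choose_prime)
  show "\<not> int p dvd lead_coeff (F * G)"
    using assms p1 by (auto simp flip: assms(2) simp: degree_shifted_cyclotomic coeff_shifted_cyclotomic)
  show "\<not> (int p) ^ 2 dvd coeff (F * G) 0"
    using assms p1 by (auto simp flip: assms(2) simp: coeff_shifted_cyclotomic power2_eq_square)
qed

lemma min_degree_root_dvd_smult:
  fixes x :: "'a :: comm_ring_1"
  assumes R: "R \<noteq> 0" "poly (map_poly of_int R) x = 0"
    and min: "\<And>S. S \<noteq> 0 \<Longrightarrow> poly (map_poly of_int S) x = 0 \<Longrightarrow> degree R \<le> degree S"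
    and E: "poly (map_poly of_int E) x = 0"
  obtains c q where "c \<noteq> 0" "smult c E = R * q"
proof -
  obtain q r where qr: "pseudo_divmod E R = (q, r)" by (metis surj_pair)
  define c where "c = lead_coeff R ^ (Suc (degree E) - degree R)"
  have "c \<noteq> 0" using R(1) by (simp add: c_def)
  have eq: "smult c E = R * q + r" using pseudo_divmod(1)[OF R(1) qr] c_def by simp
  have "poly (map_poly of_int r) x = 0"
    using arg_cong[OF eq, of "\<lambda>f. poly (map_poly of_int f) x"] R(2) E
    by (simp add: map_poly_of_int_add map_poly_of_int_mult map_poly_of_int_smult)
  then have "r = 0"
    using pseudo_divmod(2)[OF R(1) qr] min[of r] by fastforce
  then show ?thesis using that \<open>c \<noteq> 0\<close> eq by simp
qed

lemma content_1_smult_eq_mult: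
  fixes E R q :: "int poly"
  assumes "content E = 1" "c \<noteq> 0" "smult c E = R * q"
  shows "E = smult (sgn c) (primitive_part R) * primitive_part q"
proof -
  have "primitive_part E = E"
    using content_times_primitive_part[of E] assms(1) by simp
  then have "smult (sgn c) E = primitive_part R * primitive_part q"
    using arg_cong[OF assms(3), of primitive_part]
    by (simp add: primitive_part_smult primitive_part_mult unit_factor_int_def)
  then have "smult (sgn c) (smult (sgn c) E) = smult (sgn c) (primitive_part R) * primitive_part q"
    by simp
  then show ?thesis using assms(2) by (simp add: sgn_mult[symmetric])
qed

text \<open>The minimal polynomial of \<open>z - 1\<close> divides \<open>\<Phi>\<^sub>p(x + 1)\<close> up to a constant, so by
  Eisenstein it is an associate of \<open>\<Phi>\<^sub>p(x + 1)\<close>.\<close>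
theorem degree_int_poly_root_of_unity:
  fixes z :: "'a :: {idom, ring_char_0}"
  assumes p: "prime p" and z: "z ^ p = 1" "z \<noteq> 1"
    and R: "R \<noteq> 0" "poly (map_poly of_int R) (z - 1) = 0"
  shows "p - 1 \<le> degree R"
proof -
  have p1: "p \<ge> 1" using p prime_ge_1_nat by blast
  define vanishes where "vanishes S \<longleftrightarrow> S \<noteq> 0 \<and> poly (map_poly of_int S) (z - 1) = 0" for S
  obtain R0 where R0: "vanishes R0" and min: "\<And>S. vanishes S \<Longrightarrow> degree R0 \<le> degree S"
    using ex_has_least_nat[of vanishes R degree] R vanishes_def by blast
  obtain c q where c: "c \<noteq> 0" and dvd: "smult c (shifted_cyclotomic p) = R0 * q"
    using min_degree_root_dvd_smult[of R0 "z - 1" "shifted_cyclotomic p"] R0 min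
      poly_shifted_cyclotomic_root[OF p1 z] unfolding vanishes_def by blast
  have factor: "shifted_cyclotomic p = smult (sgn c) (primitive_part R0) * primitive_part q"
    by (rule content_1_smult_eq_mult[OF content_shifted_cyclotomic[OF p1] c dvd])
  have deg_R0: "degree (smult (sgn c) (primitive_part R0)) = degree R0"
    using c by (simp add: sgn_0_0)
  have "degree R0 = 0 \<or> degree (primitive_part q) = 0"
    using shifted_cyclotomic_factor_degree[OF p factor] deg_R0 by simp
  moreover have "degree R0 \<noteq> 0"
  proof
    assume "degree R0 = 0"
    then obtain a where "R0 = [:a:]" by (metis degree_eq_zeroE)
    then show False using R0 by (simp add: vanishes_def map_poly_of_int_const)
  qed
  moreover have "degree (shifted_cyclotomic p) = degree R0 + degree (primitive_part q)"
  proof -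
    have "shifted_cyclotomic p \<noteq> 0"
      using lead_coeff_shifted_cyclotomic[OF p1] by auto
    then show ?thesis using factor deg_R0 by (metis degree_mult_eq mult_eq_0_iff)
  qed
  ultimately have "degree R0 = p - 1" using degree_shifted_cyclotomic[OF p1] by simp
  then show ?thesis using min[of R] R vanishes_def by auto
qed

theorem root_of_unity_powers_independent:
  fixes z :: "'a :: {idom, ring_char_0}" and c :: "nat \<Rightarrow> int"
  assumes p: "prime p" and z: "z ^ p = 1" "z \<noteq> 1"
    and sum0: "(\<Sum>j\<in>{1..<p}. of_int (c j) * z ^ j) = 0" and j: "j \<in> {1..<p}"
  shows "c j = 0"
proof -
  define Q where "Q = (\<Sum>k<p - 1. monom (c (Suc k)) k)"
  have coeff_Q: "coeff Q k = (if k < p - 1 then c (Suc k) else 0)" for k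
    by (simp add: Q_def coeff_sum coeff_monom)
  have "z * poly (map_poly of_int Q) z = (\<Sum>k<p - 1. of_int (c (Suc k)) * z ^ Suc k)"
    by (simp add: Q_def map_poly_of_int_sum poly_sum map_poly_monom poly_monom sum_distrib_left
        mult_ac)
  also have "\<dots> = (\<Sum>j\<in>{1..<p}. of_int (c j) * z ^ j)"
    using sum.atLeastLessThan_shift_0[of "\<lambda>j. of_int (c j) * z ^ j" 1 p] p
    by (simp add: atLeast0LessThan prime_gt_0_nat)
  finally have "poly (map_poly of_int Q) z = 0"
    using sum0 z(1) prime_gt_0_nat[OF p] by (auto simp: power_0_left)
  then have "poly (map_poly of_int (pcompose Q [:1, 1:])) (z - 1) = 0"
    by (simp add: poly_map_poly_of_int_pcompose map_poly_pCons)
  moreover have "degree (pcompose Q [:1, 1:]) < p - 1"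
  proof -
    have "degree Q \<le> p - 2" by (rule degree_le) (auto simp: coeff_Q)
    then show ?thesis using prime_gt_1_nat[OF p] by (simp add: degree_pcompose)
  qed
  ultimately have "pcompose Q [:1, 1:] = 0"
    using degree_int_poly_root_of_unity[OF p z] by fastforce
  then have "Q = 0" by (simp add: pcompose_eq_0)
  moreover have "Suc (j - 1) = j" "j - 1 < p - 1" using j by auto
  ultimately show ?thesis using coeff_Q[of "j - 1"] by simp
qed

lemma omega_pow_self: "p > 0 \<Longrightarrow> omega p ^ p = 1"
  by (simp add: omega_def DeMoivre)

lemma omega_neq_1: assumes "p > 1" shows "omega p \<noteq> 1"
proof
  assume "omega p = 1"
  then have "cis (2 * pi * real 1 / real p) = cis (2 * pi * real 0 / real p)"
    by (simp add: omega_def)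
  moreover have "inj_on (\<lambda>k. cis (2 * pi * real k / real p)) {..<p}"
    using bij_betw_roots_unity[of p] assms by (auto simp: bij_betw_def)
  ultimately show False using assms by (auto dest: inj_onD[of _ _ 1 0])
qed

lemma omega_pow_mod: assumes "p > 0" shows "omega p ^ (n mod p) = omega p ^ n"
proof -
  have "omega p ^ n = (omega p ^ p) ^ (n div p) * omega p ^ (n mod p)"
    by (simp flip: power_mult power_add)
  then show ?thesis using omega_pow_self[OF assms] by simp
qed

lemma omega_pow_cong: "p > 0 \<Longrightarrow> n mod p = m mod p \<Longrightarrow> omega p ^ n = omega p ^ m"
  by (metis omega_pow_mod)

lemma cnj_omega_pow_mult_self: "cnj (omega p ^ n) * omega p ^ n = 1"
proof -
  have "norm (omega p ^ n) = 1" by (simp add: omega_def norm_power)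
  then show ?thesis by (metis complex_norm_square mult.commute of_real_1 power_one)
qed

theorem sum_omega_powers_inj:
  assumes p: "prime p" and A: "A \<subseteq> {..<p}" and B: "B \<subseteq> {..<p}" and zero: "0 \<in> A \<longleftrightarrow> 0 \<in> B"
    and eq: "(\<Sum>j\<in>A. omega p ^ j) = (\<Sum>j\<in>B. omega p ^ j)"
  shows "A = B"
proof -
  have p1: "p > 1" using prime_gt_1_nat[OF p] .
  have split_0: "(\<Sum>j\<in>X. omega p ^ j) =
      (if 0 \<in> X then 1 else 0) + (\<Sum>j\<in>{1..<p}. if j \<in> X then omega p ^ j else 0)"
    if "X \<subseteq> {..<p}" for X
  proof -
    have "(\<Sum>j\<in>X. omega p ^ j) = (\<Sum>j<p. if j \<in> X then omega p ^ j else 0)"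
      using that by (simp add: sum.inter_restrict[symmetric] Int_absorb1)
    also have "\<dots> = (if 0 \<in> X then 1 else 0) + (\<Sum>j\<in>{1..<p}. if j \<in> X then omega p ^ j else 0)"
    proof -
      have "{..<p} - {0} = {1..<p}" by auto
      then show ?thesis using p1 by (simp add: sum.remove[of "{..<p}" 0])
    qed
    finally show ?thesis .
  qed
  define c :: "nat \<Rightarrow> int" where "c j = of_bool (j \<in> A) - of_bool (j \<in> B)" for j
  have "(\<Sum>j\<in>{1..<p}. of_int (c j) * omega p ^ j) =
      (\<Sum>j\<in>{1..<p}. if j \<in> A then omega p ^ j else 0) - (\<Sum>j\<in>{1..<p}. if j \<in> B then omega p ^ j else 0)"
    by (simp add: c_def sum_subtractf[symmetric] algebra_simps) (intro sum.cong; simp)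
  also have "\<dots> = 0" using eq split_0[OF A] split_0[OF B] zero by simp
  finally have c0: "c j = 0" if "j \<in> {1..<p}" for j
    using root_of_unity_powers_independent[OF p omega_pow_self omega_neq_1 _ that] p1 by simp
  have "j \<in> A \<longleftrightarrow> j \<in> B" if "j < p" for j
  proof (cases "j = 0")
    case False
    then have "c j = 0" using c0 that by simp
    then show ?thesis by (auto simp: c_def of_bool_def split: if_splits)
  qed (use zero in simp)
  then show ?thesis using A B by blast
qed

section \<open>Dilations of subsets of \<open>\<int>\<^sub>p\<close>\<close>

definition dilate :: "nat \<Rightarrow> nat \<Rightarrow> nat set \<Rightarrow> nat set" where
  "dilate p a X = (\<lambda>x. a * x mod p) ` X"

lemma coprime_less_prime: "prime p \<Longrightarrow> 0 < a \<Longrightarrow> a < p \<Longrightarrow> coprime a (p :: nat)"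
  using prime_nat_iff'' coprime_commute by blast

lemma mult_mod_inverse_exists:
  fixes p a :: nat
  assumes "prime p" "0 < a" "a < p"
  obtains b where "0 < b" "b < p" "a * b mod p = 1"
proof -
  have p1: "p > 1" using prime_gt_1_nat[OF assms(1)] .
  obtain x where x: "[a * x = Suc 0] (mod p)"
    using cong_solve_coprime_nat[OF coprime_less_prime[OF assms]] by blast
  have "a * (x mod p) mod p = 1" using x p1 by (simp add: cong_def mod_mult_right_eq)
  moreover from this have "x mod p \<noteq> 0" by (intro notI) simp
  ultimately show ?thesis using that p1 by simp
qed

lemma mult_mod_cancel:
  fixes p a x y :: nat
  assumes "prime p" "0 < a" "a < p" "x < p" "y < p" "a * x mod p = a * y mod p"
  shows "x = y"
proof -
  have "[a * x = a * y] (mod p)" using assms(6) by (simp add: cong_def)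
  then have "[x = y] (mod p)" using cong_mult_lcancel_nat coprime_less_prime[OF assms(1-3)] by blast
  then show ?thesis using assms(4,5) by (simp add: cong_def)
qed

lemma inj_on_mult_mod:
  "prime (p :: nat) \<Longrightarrow> 0 < a \<Longrightarrow> a < p \<Longrightarrow> X \<subseteq> {..<p} \<Longrightarrow> inj_on (\<lambda>x. a * x mod p) X"
  by (intro inj_onI) (rule mult_mod_cancel, auto)

lemma mult_mod_eq_0_iff:
  "prime (p :: nat) \<Longrightarrow> 0 < a \<Longrightarrow> a < p \<Longrightarrow> x < p \<Longrightarrow> a * x mod p = 0 \<longleftrightarrow> x = 0"
  using mult_mod_cancel[of p a x 0] by auto

lemma dilate_subset: "p > 0 \<Longrightarrow> dilate p a X \<subseteq> {..<p}"
  by (auto simp: dilate_def)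

lemma card_dilate:
  "prime (p :: nat) \<Longrightarrow> 0 < a \<Longrightarrow> a < p \<Longrightarrow> X \<subseteq> {..<p} \<Longrightarrow> card (dilate p a X) = card X"
  unfolding dilate_def by (rule card_image) (rule inj_on_mult_mod)

lemma zero_in_dilate_iff:
  fixes p a :: nat
  assumes "prime p" "0 < a" "a < p" "X \<subseteq> {..<p}"
  shows "0 \<in> dilate p a X \<longleftrightarrow> 0 \<in> X"
proof -
  have "a * x mod p = 0 \<longleftrightarrow> x = 0" if "x \<in> X" for x
    using that assms(4) by (intro mult_mod_eq_0_iff[OF assms(1-3)]) auto
  then show ?thesis unfolding dilate_def image_iff by metis
qed

lemma dilate_dilate: "dilate p a (dilate p b X) = dilate p (a * b mod p) X"
  unfolding dilate_def image_image
  by (intro image_cong refl) (simp add: mod_mult_right_eq mod_mult_left_eq mult.assoc)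

lemma dilate_1: "X \<subseteq> {..<p} \<Longrightarrow> dilate p 1 X = X"
  unfolding dilate_def by (rule image_cong[where g = id, simplified]) auto

lemma dilate_inverse: "X \<subseteq> {..<p} \<Longrightarrow> b * a mod p = 1 \<Longrightarrow> dilate p b (dilate p a X) = X"
  using dilate_1[of X p] by (simp add: dilate_dilate)

section \<open>Unitary equivalence of harmonic frames\<close>

lemma sum_sorted_list_of_set_nth:
  assumes "finite J"
  shows "(\<Sum>i<card J. f (sorted_list_of_set J ! i)) = (\<Sum>j\<in>J. f j)"
proof -
  have "bij_betw ((!) (sorted_list_of_set J)) {..<card J} J"
    by (rule bij_betw_nth) (use assms in auto)
  then show ?thesis by (rule sum.reindex_bij_betw)
qed

lemma unitary_mat_inner:
  assumes U: "unitary_mat d U"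
  shows "(\<Sum>i<d. (\<Sum>a<d. U i a * v a) * cnj (\<Sum>b<d. U i b * w b)) = (\<Sum>a<d. v a * cnj (w a))"
proof -
  have "(\<Sum>i<d. (\<Sum>a<d. U i a * v a) * cnj (\<Sum>b<d. U i b * w b))
      = (\<Sum>i<d. \<Sum>a<d. \<Sum>b<d. (v a * cnj (w b)) * (U i a * cnj (U i b)))"
  proof (rule sum.cong[OF refl])
    fix i
    have "(\<Sum>a<d. U i a * v a) * cnj (\<Sum>b<d. U i b * w b) =
        (\<Sum>a<d. \<Sum>b<d. (U i a * v a) * (cnj (U i b) * cnj (w b)))"
      by (simp add: cnj_sum sum_product)
    then show "(\<Sum>a<d. U i a * v a) * cnj (\<Sum>b<d. U i b * w b) =
        (\<Sum>a<d. \<Sum>b<d. (v a * cnj (w b)) * (U i a * cnj (U i b)))"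
      by (simp add: mult_ac)
  qed
  also have "\<dots> = (\<Sum>a<d. \<Sum>b<d. \<Sum>i<d. (v a * cnj (w b)) * (U i a * cnj (U i b)))"
    by (subst sum.swap) (rule sum.cong[OF refl], rule sum.swap)
  also have "\<dots> = (\<Sum>a<d. \<Sum>b<d. (v a * cnj (w b)) * (if a = b then 1 else 0))"
  proof (intro sum.cong refl)
    fix a b assume ab: "a \<in> {..<d}" "b \<in> {..<d}"
    have "(\<Sum>i<d. U i a * cnj (U i b)) = cnj (\<Sum>i<d. cnj (U i a) * U i b)"
      by (simp add: cnj_sum mult.commute)
    also have "\<dots> = (if a = b then 1 else 0)"
      using U ab unfolding unitary_mat_def by auto
    finally show "(\<Sum>i<d. (v a * cnj (w b)) * (U i a * cnj (U i b))) =
        v a * cnj (w b) * (if a = b then 1 else 0)"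
      by (simp add: sum_distrib_left[symmetric])
  qed
  also have "\<dots> = (\<Sum>a<d. v a * cnj (w a))"
    by (simp add: if_distrib cong: if_cong)
  finally show ?thesis .
qed

lemma harm_frame_inner:
  "finite J \<Longrightarrow> (\<Sum>i<card J. harm_frame p J k i * cnj (harm_frame p J l i)) =
     (\<Sum>j\<in>J. omega p ^ (j * k) * cnj (omega p ^ (j * l)))"
  unfolding harm_frame_def by (rule sum_sorted_list_of_set_nth)

lemma omega_pow_mult_cnj:
  assumes "p > 0" "(m + s) mod p = t mod p"
  shows "omega p ^ (j * t) * cnj (omega p ^ (j * s)) = omega p ^ (m * j mod p)"
proof -
  have "j * (m + s) mod p = j * t mod p" using assms(2) by (metis mod_mult_right_eq)
  then have "omega p ^ (j * t) = omega p ^ (m * j) * omega p ^ (j * s)"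
    using omega_pow_cong[OF assms(1)] by (metis add_mult_distrib2 mult.commute power_add)
  then have "omega p ^ (j * t) * cnj (omega p ^ (j * s)) = omega p ^ (m * j)"
    using cnj_omega_pow_mult_self[of p "j * s"] by (simp add: mult_ac)
  then show ?thesis using omega_pow_mod[OF assms(1)] by simp
qed

lemma mod_shift_exists:
  fixes p s t :: nat
  assumes "s < p" "t < p" "s \<noteq> t"
  obtains m where "0 < m" "m < p" "(m + s) mod p = t"
proof
  define m where "m = (t + p - s) mod p"
  have "(m + s) mod p = (t + p - s + s) mod p" unfolding m_def by (simp add: mod_add_left_eq)
  also have "\<dots> = t" using assms(1,2) by simp
  finally show "(m + s) mod p = t" .
  then show "0 < m" using assms by (cases "m = 0") auto
  show "m < p" using assms(1) by (simp add: m_def)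
qed

lemma unit_equiv_imp_dilate:
  assumes p: "prime p" and J: "J \<subseteq> {..<p}" and K: "K \<subseteq> {..<p}"
    and card: "card J = d" "card K = d" and zero: "0 \<in> J \<longleftrightarrow> 0 \<in> K"
    and equiv: "unit_equiv d {..<p} (harm_frame p J) {..<p} (harm_frame p K)"
  obtains m where "0 < m" "m < p" "J = dilate p m K"
proof -
  have p1: "p > 1" using prime_gt_1_nat[OF p] .
  have fin: "finite J" "finite K" using J K finite_subset by auto
  obtain U \<sigma> where U: "unitary_mat d U" and \<sigma>: "bij_betw \<sigma> {..<p} {..<p}"
    and frame: "\<forall>k\<in>{..<p}. \<forall>i<d. harm_frame p J k i = (\<Sum>l<d. U i l * harm_frame p K (\<sigma> k) l)"
    using equiv unfolding unit_equiv_def by blast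
  text \<open>Both sides are the inner product of the frame vectors with indices \<open>1\<close> and \<open>0\<close>.\<close>
  have "(\<Sum>j\<in>J. omega p ^ j) = (\<Sum>j\<in>J. omega p ^ (j * 1) * cnj (omega p ^ (j * 0)))" by simp
  also have "\<dots> = (\<Sum>i<d. harm_frame p J 1 i * cnj (harm_frame p J 0 i))"
    using harm_frame_inner[OF fin(1)] card by simp
  also have "\<dots> = (\<Sum>i<d. (\<Sum>l<d. U i l * harm_frame p K (\<sigma> 1) l) *
      cnj (\<Sum>l<d. U i l * harm_frame p K (\<sigma> 0) l))"
    using frame p1 by auto
  also have "\<dots> = (\<Sum>l<d. harm_frame p K (\<sigma> 1) l * cnj (harm_frame p K (\<sigma> 0) l))"
    by (rule unitary_mat_inner[OF U])
  also have "\<dots> = (\<Sum>j\<in>K. omega p ^ (j * \<sigma> 1) * cnj (omega p ^ (j * \<sigma> 0)))"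
    using harm_frame_inner[OF fin(2)] card by simp
  finally have sum_J: "(\<Sum>j\<in>J. omega p ^ j) = (\<Sum>j\<in>K. omega p ^ (j * \<sigma> 1) * cnj (omega p ^ (j * \<sigma> 0)))" .
  have "\<sigma> 0 < p" "\<sigma> 1 < p" using \<sigma> p1 by (auto simp: bij_betw_def)
  moreover have "\<sigma> 0 \<noteq> \<sigma> 1" using \<sigma> p1 by (auto simp: bij_betw_def dest: inj_onD[of _ _ 1 0])
  ultimately
  obtain m where m: "0 < m" "m < p" "(m + \<sigma> 0) mod p = \<sigma> 1"
    by (rule mod_shift_exists)
  have "(\<Sum>j\<in>J. omega p ^ j) = (\<Sum>j\<in>K. omega p ^ (m * j mod p))"
    using sum_J omega_pow_mult_cnj[of p m "\<sigma> 0" "\<sigma> 1"] m(3) p1 \<open>\<sigma> 1 < p\<close> by simp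
  also have "\<dots> = (\<Sum>x\<in>dilate p m K. omega p ^ x)"
    unfolding dilate_def by (subst sum.reindex) (use inj_on_mult_mod[OF p m(1,2) K] in auto)
  finally have "J = dilate p m K"
    using sum_omega_powers_inj[OF p J dilate_subset] zero zero_in_dilate_iff[OF p m(1,2) K] p1
    by simp
  then show ?thesis using m that by blast
qed

lemma unitary_mat_permutation:
  assumes "bij_betw \<tau> {..<d} {..<d}"
  shows "unitary_mat d (\<lambda>i l. if l = \<tau> i then 1 else 0)"
  unfolding unitary_mat_def
proof (intro allI impI)
  fix i l assume "i < d" "l < d"
  have "(\<Sum>m<d. cnj (if i = \<tau> m then 1 else 0) * (if l = \<tau> m then 1 else 0)) =
      (\<Sum>m<d. if \<tau> m = i \<and> \<tau> m = l then 1 else (0 :: complex))"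
    by (intro sum.cong) auto
  also have "\<dots> = (\<Sum>y<d. if y = i \<and> y = l then 1 else 0)"
    using sum.reindex_bij_betw[OF assms, of "\<lambda>y. if y = i \<and> y = l then (1::complex) else 0"] by simp
  also have "\<dots> = (if i = l then 1 else 0)"
    using \<open>i < d\<close> by (cases "i = l") (simp_all add: sum.delta sum.neutral)
  finally show "(\<Sum>m<d. cnj (if i = \<tau> m then 1 else 0) * (if l = \<tau> m then 1 else 0)) =
      (if i = l then 1 else 0)" .
qed

lemma mult_mod_inverse_cancel:
  fixes a b x k p :: nat
  assumes "a * b mod p = 1"
  shows "(a * x mod p) * (b * k mod p) mod p = x * k mod p"
proof -
  have "(a * x mod p) * (b * k mod p) mod p = (a * b) * (x * k) mod p"
    by (simp add: mod_mult_eq mult_ac)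
  also have "\<dots> = (a * b mod p) * (x * k) mod p" by (simp add: mod_mult_left_eq)
  finally show ?thesis using assms by simp
qed

lemma bij_betw_mult_mod:
  fixes p b :: nat
  assumes "prime p" "0 < b" "b < p"
  shows "bij_betw (\<lambda>k. b * k mod p) {..<p} {..<p}"
proof -
  have inj: "inj_on (\<lambda>k. b * k mod p) {..<p}" by (rule inj_on_mult_mod[OF assms]) simp
  moreover have "(\<lambda>k. b * k mod p) ` {..<p} = {..<p}"
    by (rule endo_inj_surj) (use inj assms(3) in auto)
  ultimately show ?thesis by (simp add: bij_betw_def)
qed

lemma sorted_list_of_set_permutation:
  assumes "finite J" "bij_betw f J K"
  obtains \<tau> where "bij_betw \<tau> {..<card J} {..<card J}"
    "\<And>i. i < card J \<Longrightarrow> sorted_list_of_set K ! \<tau> i = f (sorted_list_of_set J ! i)"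
proof
  define sJ where "sJ = sorted_list_of_set J"
  define sK where "sK = sorted_list_of_set K"
  have "finite K" using assms by (simp add: bij_betw_finite)
  moreover have "card K = card J" using assms(2) by (simp add: bij_betw_same_card)
  ultimately have nth_K: "bij_betw ((!) sK) {..<card J} K"
    unfolding sK_def by (metis bij_betw_nth distinct_sorted_list_of_set length_sorted_list_of_set
        set_sorted_list_of_set lessThan_atLeast0)
  have nth_J: "bij_betw ((!) sJ) {..<card J} J"
    unfolding sJ_def by (rule bij_betw_nth) (use assms(1) in auto)
  define \<tau> where "\<tau> = inv_into {..<card J} ((!) sK) \<circ> (f \<circ> ((!) sJ))"
  show "bij_betw \<tau> {..<card J} {..<card J}"
    unfolding \<tau>_def by (rule bij_betw_trans[OF bij_betw_trans[OF nth_J assms(2)] bij_betw_inv_into[OF nth_K]])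
  show "sK ! \<tau> i = f (sJ ! i)" if "i < card J" for i
  proof -
    have "f (sJ ! i) \<in> (!) sK ` {..<card J}"
      using nth_J assms(2) nth_K that by (auto simp: bij_betw_def)
    then show ?thesis unfolding \<tau>_def by (simp add: f_inv_into_f)
  qed
qed

text \<open>Dilating \<open>J\<close> by \<open>a\<close> permutes the coordinates, and multiplying the frame index by
  \<open>a\<^sup>-\<^sup>1\<close> undoes the change of the entries.\<close>
lemma unit_equiv_dilate:
  assumes p: "prime p" and J: "J \<subseteq> {..<p}" and a: "0 < a" "a < p"
  shows "unit_equiv (card J) {..<p} (harm_frame p J) {..<p} (harm_frame p (dilate p a J))"
proof -
  define K where "K = dilate p a J"
  have fin: "finite J" using J finite_subset by auto
  have "bij_betw (\<lambda>x. a * x mod p) J K"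
    unfolding K_def dilate_def by (rule bij_betw_imageI[OF inj_on_mult_mod[OF p a J] refl])
  then obtain \<tau> where \<tau>: "bij_betw \<tau> {..<card J} {..<card J}"
    and nth_\<tau>: "\<And>i. i < card J \<Longrightarrow> sorted_list_of_set K ! \<tau> i = a * (sorted_list_of_set J ! i) mod p"
    using sorted_list_of_set_permutation[OF fin] by blast
  obtain b where b: "0 < b" "b < p" "a * b mod p = 1" using mult_mod_inverse_exists[OF p a] .
  have "harm_frame p J k i = (\<Sum>l<card J. (if l = \<tau> i then 1 else 0) * harm_frame p K (b * k mod p) l)"
    if i: "i < card J" for k i
  proof -
    have "\<tau> i < card J" using \<tau> i by (auto simp: bij_betw_def)
    have "(\<Sum>l<card J. (if l = \<tau> i then 1 else 0) * harm_frame p K (b * k mod p) l) =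
        (\<Sum>l<card J. if l = \<tau> i then harm_frame p K (b * k mod p) l else 0)"
      by (intro sum.cong) auto
    also have "\<dots> = harm_frame p K (b * k mod p) (\<tau> i)"
      using \<open>\<tau> i < card J\<close> by (simp add: sum.delta')
    also have "\<dots> = omega p ^ ((a * (sorted_list_of_set J ! i) mod p) * (b * k mod p))"
      unfolding harm_frame_def nth_\<tau>[OF i] ..
    also have "\<dots> = omega p ^ (sorted_list_of_set J ! i * k)"
      by (rule omega_pow_cong) (use p prime_gt_0_nat mult_mod_inverse_cancel[OF b(3)] in auto)
    finally show ?thesis unfolding harm_frame_def ..
  qed
  then show ?thesis
    unfolding unit_equiv_def K_def[symmetric]
    using unitary_mat_permutation[OF \<tau>] bij_betw_mult_mod[OF p b(1,2)] by blast
qed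

theorem unit_equiv_harm_frame_iff:
  assumes p: "prime p" and J: "J \<subseteq> {..<p}" and K: "K \<subseteq> {..<p}"
    and card: "card J = d" "card K = d" and zero: "0 \<in> J \<longleftrightarrow> 0 \<in> K"
  shows "unit_equiv d {..<p} (harm_frame p J) {..<p} (harm_frame p K) \<longleftrightarrow>
    (\<exists>a. 0 < a \<and> a < p \<and> K = dilate p a J)"
proof
  assume "unit_equiv d {..<p} (harm_frame p J) {..<p} (harm_frame p K)"
  then obtain m where m: "0 < m" "m < p" "J = dilate p m K"
    by (rule unit_equiv_imp_dilate[OF assms])
  obtain b where b: "0 < b" "b < p" "m * b mod p = 1" using mult_mod_inverse_exists[OF p m(1,2)] .
  then have "K = dilate p b J" using m(3) dilate_inverse[OF K, of b m] by (simp add: mult.commute)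
  then show "\<exists>a. 0 < a \<and> a < p \<and> K = dilate p a J" using b by auto
next
  assume "\<exists>a. 0 < a \<and> a < p \<and> K = dilate p a J"
  then obtain a where "0 < a" "a < p" "K = dilate p a J" by blast
  then show "unit_equiv d {..<p} (harm_frame p J) {..<p} (harm_frame p K)"
    using unit_equiv_dilate[OF p J] card by simp
qed

section \<open>Counting the equivalence classes\<close>

lemma inj_on_Union_quotient:
  assumes "equiv A r"
  shows "inj_on Union (Pow (A // r))"
proof (rule inj_onI)
  have member: "B \<in> Q'" if Q: "Q \<subseteq> A // r" "Q' \<subseteq> A // r" "\<Union>Q = \<Union>Q'" "B \<in> Q" for Q Q' B
  proof -
    obtain x where "x \<in> B" using Q assms in_quotient_imp_non_empty by blast
    then obtain B' where "B' \<in> Q'" "x \<in> B'" using Q by blast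
    then have "B = B'" using Q \<open>x \<in> B\<close> quotient_disj[OF assms] by blast
    then show ?thesis using \<open>B' \<in> Q'\<close> by simp
  qed
  fix Q Q' assume "Q \<in> Pow (A // r)" "Q' \<in> Pow (A // r)" "\<Union>Q = \<Union>Q'"
  then show "Q = Q'" using member[of Q Q'] member[of Q' Q] by auto
qed

lemma Union_quotient_saturated:
  assumes "equiv A r"
  shows "Union ` Pow (A // r) = {X. X \<subseteq> A \<and> (\<forall>x\<in>X. r `` {x} \<subseteq> X)}"
proof (intro equalityI subsetI)
  fix X assume "X \<in> Union ` Pow (A // r)"
  then obtain Q where Q: "Q \<subseteq> A // r" "X = \<Union>Q" by blast
  have "r `` {x} \<subseteq> X" if x: "x \<in> X" for x
  proof -
    obtain B where "B \<in> Q" "x \<in> B" using x Q by blast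
    then obtain y where "y \<in> A" "B = r `` {y}" using Q unfolding quotient_def by blast
    then have "r `` {x} = B" using \<open>x \<in> B\<close> equiv_class_eq[OF assms] by blast
    then show ?thesis using \<open>B \<in> Q\<close> Q(2) by blast
  qed
  moreover have "X \<subseteq> A" using Q Union_quotient[OF assms] by blast
  ultimately show "X \<in> {X. X \<subseteq> A \<and> (\<forall>x\<in>X. r `` {x} \<subseteq> X)}" by blast
next
  fix X assume "X \<in> {X. X \<subseteq> A \<and> (\<forall>x\<in>X. r `` {x} \<subseteq> X)}"
  then have X: "X \<subseteq> A" "\<And>x. x \<in> X \<Longrightarrow> r `` {x} \<subseteq> X" by auto
  have "X = \<Union>{B \<in> A // r. B \<subseteq> X}"
  proof (intro equalityI subsetI)
    fix x assume "x \<in> X"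
    then have "x \<in> A" using X(1) by blast
    then have "r `` {x} \<in> A // r" "x \<in> r `` {x}"
      using assms by (auto intro: quotientI dest: equiv_class_self)
    then show "x \<in> \<Union>{B \<in> A // r. B \<subseteq> X}" using X(2) \<open>x \<in> X\<close> by blast
  qed blast
  then show "X \<in> Union ` Pow (A // r)" by blast
qed

lemma card_Union_quotient:
  assumes "equiv A r" "finite A" "\<And>B. B \<in> A // r \<Longrightarrow> card B = j" "Q \<subseteq> A // r"
  shows "card (\<Union>Q) = j * card Q"
proof -
  have "card (\<Union>Q) = (\<Sum>B\<in>Q. card B)"
  proof (rule card_Union_disjoint)
    show "pairwise disjnt Q"
      using assms(4) quotient_disj[OF assms(1)] unfolding pairwise_def disjnt_def by blast
    show "finite B" if B: "B \<in> Q" for B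
    proof (rule finite_subset[OF _ assms(2)])
      show "B \<subseteq> A" using B assms(4) Union_quotient[OF assms(1)] by blast
    qed
  qed
  also have "\<dots> = (\<Sum>B\<in>Q. j)" using assms(3,4) by (intro sum.cong) auto
  also have "\<dots> = j * card Q" by simp
  finally show ?thesis .
qed

theorem card_saturated_subsets:
  assumes eq: "equiv A r" and fin: "finite A" and j: "j > 0"
    and classes: "\<And>B. B \<in> A // r \<Longrightarrow> card B = j"
  shows "card {X. X \<subseteq> A \<and> (\<forall>x\<in>X. r `` {x} \<subseteq> X) \<and> card X = d} =
    (if j dvd d then (card A div j) choose (d div j) else 0)"
proof -
  have fin_quot: "finite (A // r)" using fin eq by (simp add: finite_quotient equiv_type)
  have card_A: "card A = j * card (A // r)"
    using card_Union_quotient[OF eq fin classes order_refl] Union_quotient[OF eq] by simp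
  have "{X. X \<subseteq> A \<and> (\<forall>x\<in>X. r `` {x} \<subseteq> X) \<and> card X = d} =
      {X \<in> Union ` Pow (A // r). card X = d}"
    unfolding Union_quotient_saturated[OF eq] by simp
  also have "\<dots> = Union ` {Q. Q \<subseteq> A // r \<and> j * card Q = d}"
    using card_Union_quotient[OF eq fin classes] by auto
  also have "card \<dots> = card {Q. Q \<subseteq> A // r \<and> j * card Q = d}"
    by (rule card_image) (rule inj_on_subset[OF inj_on_Union_quotient[OF eq]], blast)
  also have "\<dots> = (if j dvd d then (card A div j) choose (d div j) else 0)"
  proof (cases "j dvd d")
    case True
    then have "{Q. Q \<subseteq> A // r \<and> j * card Q = d} = {Q. Q \<subseteq> A // r \<and> card Q = d div j}"
      using j by auto
    then show ?thesis using True n_subsets[OF fin_quot] card_A j by simp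
  next
    case False
    then have "{Q. Q \<subseteq> A // r \<and> j * card Q = d} = {}" by auto
    then show ?thesis using False by (simp only: card.empty if_False)
  qed
  finally show ?thesis .
qed

definition power_orbit_rel :: "nat \<Rightarrow> nat \<Rightarrow> (nat \<times> nat) set" where
  "power_orbit_rel p a = {(x, y). x \<in> {1..<p} \<and> y \<in> {1..<p} \<and> (\<exists>i. y = a ^ i * x mod p)}"

context
  fixes p a :: nat
  assumes p: "prime p" and a: "0 < a" "a < p"
begin

lemma ord_unit_pos: "ord p a > 0"
  using coprime_less_prime[OF p a] by (simp add: coprime_commute)

lemma pow_mult_mod_ord: "a ^ i * x mod p = a ^ (i mod ord p a) * x mod p"
proof -
  have "[a ^ ord p a = 1] (mod p)" using ord_works[of a p] by simp
  then have "[(a ^ ord p a) ^ (i div ord p a) * (a ^ (i mod ord p a) * x) =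
      1 ^ (i div ord p a) * (a ^ (i mod ord p a) * x)] (mod p)"
    by (intro cong_mult cong_pow cong_refl)
  then show ?thesis
    by (simp add: cong_def flip: power_mult power_add mult.assoc)
qed

lemma pow_mult_mod_mem: "x \<in> {1..<p} \<Longrightarrow> a ^ i * x mod p \<in> {1..<p}"
proof -
  assume x: "x \<in> {1..<p}"
  have "\<not> p dvd a" using a by (auto dest: dvd_imp_le)
  then have "\<not> p dvd a ^ i" using p prime_dvd_power by blast
  moreover have "\<not> p dvd x" using x by (auto dest: dvd_imp_le)
  ultimately have "\<not> p dvd a ^ i * x" using p by (simp add: prime_dvd_mult_iff)
  then show ?thesis using prime_gt_1_nat[OF p] by (auto simp: dvd_eq_mod_eq_0)
qed

lemma equiv_power_orbit_rel: "equiv {1..<p} (power_orbit_rel p a)"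
proof (rule equivI)
  show "power_orbit_rel p a \<subseteq> {1..<p} \<times> {1..<p}" unfolding power_orbit_rel_def by auto
  show "refl_on {1..<p} (power_orbit_rel p a)"
    unfolding refl_on_def power_orbit_rel_def by (auto intro: exI[of _ 0])
  show "sym (power_orbit_rel p a)" unfolding sym_def power_orbit_rel_def
  proof safe
    fix x i assume x: "x \<in> {1..<p}"
    have "ord p a * i = i * (ord p a - 1) + i" using ord_unit_pos by (cases "ord p a") auto
    then have "a ^ (i * (ord p a - 1)) * (a ^ i * x mod p) mod p = a ^ (ord p a * i) * x mod p"
      by (simp add: mod_mult_right_eq power_add mult.assoc)
    also have "\<dots> = x" using x by (subst pow_mult_mod_ord) simp
    finally show "\<exists>k. x = a ^ k * (a ^ i * x mod p) mod p" by metis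
  qed
  show "trans (power_orbit_rel p a)" unfolding trans_def power_orbit_rel_def
  proof safe
    fix x i k
    have "a ^ k * (a ^ i * x mod p) mod p = a ^ (k + i) * x mod p"
      by (simp add: mod_mult_right_eq power_add mult.assoc)
    then show "\<exists>l. a ^ k * (a ^ i * x mod p) mod p = a ^ l * x mod p" by metis
  qed
qed

lemma power_orbit_class:
  assumes "x \<in> {1..<p}"
  shows "power_orbit_rel p a `` {x} = (\<lambda>i. a ^ i * x mod p) ` {..<ord p a}"
proof
  show "power_orbit_rel p a `` {x} \<subseteq> (\<lambda>i. a ^ i * x mod p) ` {..<ord p a}"
  proof
    fix y assume "y \<in> power_orbit_rel p a `` {x}"
    then obtain i where "y = a ^ (i mod ord p a) * x mod p"
      unfolding power_orbit_rel_def using pow_mult_mod_ord by auto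
    moreover have "i mod ord p a < ord p a" using ord_unit_pos by simp
    ultimately show "y \<in> (\<lambda>i. a ^ i * x mod p) ` {..<ord p a}" by blast
  qed
  show "(\<lambda>i. a ^ i * x mod p) ` {..<ord p a} \<subseteq> power_orbit_rel p a `` {x}"
    using assms pow_mult_mod_mem unfolding power_orbit_rel_def by auto
qed

lemma card_power_orbit_class:
  assumes x: "x \<in> {1..<p}"
  shows "card (power_orbit_rel p a `` {x}) = ord p a"
proof -
  have "inj_on (\<lambda>i. a ^ i * x mod p) {..<ord p a}"
  proof (rule inj_onI)
    fix i k assume ik: "i \<in> {..<ord p a}" "k \<in> {..<ord p a}" "a ^ i * x mod p = a ^ k * x mod p"
    have "coprime x p" using coprime_less_prime[OF p] x by simp
    moreover have "[a ^ i * x = a ^ k * x] (mod p)" using ik(3) by (simp add: cong_def)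
    ultimately have "[a ^ i = a ^ k] (mod p)" using cong_mult_rcancel_nat by blast
    moreover have "coprime p a" using coprime_less_prime[OF p a] by (simp add: coprime_commute)
    ultimately show "i = k" using inj_onD[OF inj_power_mod] ik(1,2) unfolding cong_def by blast
  qed
  then show ?thesis unfolding power_orbit_class[OF x] by (simp add: card_image)
qed

lemma dilate_fixed_iff:
  assumes X: "X \<subseteq> {1..<p}"
  shows "dilate p a X = X \<longleftrightarrow> (\<forall>x\<in>X. power_orbit_rel p a `` {x} \<subseteq> X)"
proof
  assume fixed: "dilate p a X = X"
  have "a ^ i * x mod p \<in> X" if "x \<in> X" for i x
  proof (induction i)
    case 0
    then show ?case using that X by auto
  next
    case (Suc i)
    have "a ^ Suc i * x mod p = a * (a ^ i * x mod p) mod p"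
      by (simp add: mod_mult_right_eq mult.assoc)
    also have "\<dots> \<in> dilate p a X" using Suc unfolding dilate_def by blast
    finally show ?case using fixed by simp
  qed
  then show "\<forall>x\<in>X. power_orbit_rel p a `` {x} \<subseteq> X"
    unfolding power_orbit_rel_def by auto
next
  assume saturated: "\<forall>x\<in>X. power_orbit_rel p a `` {x} \<subseteq> X"
  have "dilate p a X \<subseteq> X"
  proof
    fix y assume "y \<in> dilate p a X"
    then obtain x where x: "x \<in> X" "y = a ^ 1 * x mod p" unfolding dilate_def by auto
    then have "(x, y) \<in> power_orbit_rel p a"
      using X pow_mult_mod_mem[of x 1] unfolding power_orbit_rel_def by blast
    then show "y \<in> X" using saturated x by blast
  qed
  moreover have "finite X" "X \<subseteq> {..<p}" using X finite_subset by auto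
  ultimately show "dilate p a X = X"
    using card_subset_eq card_dilate[OF p a] by metis
qed

lemma card_dilate_fixed:
  "card {X. X \<subseteq> {..<p} \<and> card X = d \<and> 0 \<notin> X \<and> dilate p a X = X} =
     (if ord p a dvd d then ((p - 1) div ord p a) choose (d div ord p a) else 0)"
proof -
  have "{X. X \<subseteq> {..<p} \<and> card X = d \<and> 0 \<notin> X \<and> dilate p a X = X} =
      {X. X \<subseteq> {1..<p} \<and> (\<forall>x\<in>X. power_orbit_rel p a `` {x} \<subseteq> X) \<and> card X = d}"
  proof (intro Collect_cong)
    fix X
    have "{1..<p} = {..<p} - {0}" by auto
    then have range: "X \<subseteq> {..<p} \<and> 0 \<notin> X \<longleftrightarrow> X \<subseteq> {1..<p}" by blast
    show "(X \<subseteq> {..<p} \<and> card X = d \<and> 0 \<notin> X \<and> dilate p a X = X) \<longleftrightarrow>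
        (X \<subseteq> {1..<p} \<and> (\<forall>x\<in>X. power_orbit_rel p a `` {x} \<subseteq> X) \<and> card X = d)"
      using range dilate_fixed_iff[of X] by (cases "X \<subseteq> {1..<p}") (auto simp: conj_commute)
  qed
  also have "card \<dots> = (if ord p a dvd d then (card {1..<p} div ord p a) choose (d div ord p a) else 0)"
  proof (rule card_saturated_subsets[OF equiv_power_orbit_rel])
    show "ord p a > 0" by (rule ord_unit_pos)
    show "card B = ord p a" if "B \<in> {1..<p} // power_orbit_rel p a" for B
      using that card_power_orbit_class by (auto simp: quotient_def)
  qed simp
  finally show ?thesis by simp
qed

end

definition unit_group :: "nat \<Rightarrow> nat monoid" where
  "unit_group p = \<lparr>carrier = {1..<p}, mult = (\<lambda>a b. a * b mod p), one = 1\<rparr>"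

lemma group_unit_group:
  assumes p: "prime p" shows "group (unit_group p)"
proof (rule groupI)
  have p1: "p > 1" using prime_gt_1_nat[OF p] .
  show "\<one>\<^bsub>unit_group p\<^esub> \<in> carrier (unit_group p)" using p1 by (simp add: unit_group_def)
  fix x y z
  assume x: "x \<in> carrier (unit_group p)"
  then have x': "0 < x" "x < p" by (auto simp: unit_group_def)
  show "\<one>\<^bsub>unit_group p\<^esub> \<otimes>\<^bsub>unit_group p\<^esub> x = x" using x' by (simp add: unit_group_def)
  obtain b where "0 < b" "b < p" "x * b mod p = 1" using mult_mod_inverse_exists[OF p x'] .
  then show "\<exists>y\<in>carrier (unit_group p). y \<otimes>\<^bsub>unit_group p\<^esub> x = \<one>\<^bsub>unit_group p\<^esub>"
    by (auto simp: unit_group_def mult.commute)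
  assume y: "y \<in> carrier (unit_group p)"
  then have "x * y mod p \<noteq> 0" using mult_mod_eq_0_iff[OF p x'] by (auto simp: unit_group_def)
  then show "x \<otimes>\<^bsub>unit_group p\<^esub> y \<in> carrier (unit_group p)"
    using p1 by (simp add: unit_group_def)
  show "x \<otimes>\<^bsub>unit_group p\<^esub> y \<otimes>\<^bsub>unit_group p\<^esub> z = x \<otimes>\<^bsub>unit_group p\<^esub> (y \<otimes>\<^bsub>unit_group p\<^esub> z)"
    by (simp add: unit_group_def mod_mult_left_eq mod_mult_right_eq mult.assoc)
qed

definition dilate_action :: "nat \<Rightarrow> nat set set \<Rightarrow> nat \<Rightarrow> nat set \<Rightarrow> nat set" where
  "dilate_action p E a = (\<lambda>X\<in>E. dilate p a X)"

lemma group_action_dilate: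
  assumes p: "prime p" and E: "\<And>X. X \<in> E \<Longrightarrow> X \<subseteq> {..<p}"
    and closed: "\<And>a X. a \<in> {1..<p} \<Longrightarrow> X \<in> E \<Longrightarrow> dilate p a X \<in> E"
  shows "group_action (unit_group p) E (dilate_action p E)"
  unfolding group_action_def group_hom_def group_hom_axioms_def hom_def
proof (intro conjI group_unit_group[OF p] group_BijGroup CollectI ballI Pi_I)
  have bij: "dilate_action p E a \<in> Bij E" if a: "a \<in> {1..<p}" for a
  proof -
    obtain b where b: "0 < b" "b < p" "a * b mod p = 1"
      using mult_mod_inverse_exists[OF p, of a] a by auto
    have "bij_betw (dilate_action p E a) E E"
    proof (rule bij_betw_byWitness[where f' = "dilate_action p E b"])
      show "\<forall>X\<in>E. dilate_action p E b (dilate_action p E a X) = X"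
        using closed a b E dilate_inverse by (simp add: dilate_action_def mult.commute)
      show "\<forall>X\<in>E. dilate_action p E a (dilate_action p E b X) = X"
        using closed a b E dilate_inverse by (simp add: dilate_action_def)
    qed (use closed a b in \<open>auto simp: dilate_action_def\<close>)
    then show ?thesis unfolding Bij_def dilate_action_def by auto
  qed
  fix a assume a: "a \<in> carrier (unit_group p)"
  then show "dilate_action p E a \<in> carrier (BijGroup E)"
    using bij by (simp add: unit_group_def BijGroup_def)
  fix b assume b: "b \<in> carrier (unit_group p)"
  have "dilate_action p E (a * b mod p) = compose E (dilate_action p E a) (dilate_action p E b)"
  proof
    fix X
    have "b \<in> {1..<p}" using b by (simp add: unit_group_def)
    then show "dilate_action p E (a * b mod p) X =
        compose E (dilate_action p E a) (dilate_action p E b) X"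
      using closed by (auto simp: dilate_action_def compose_def dilate_dilate)
  qed
  then show "dilate_action p E (a \<otimes>\<^bsub>unit_group p\<^esub> b) =
      dilate_action p E a \<otimes>\<^bsub>BijGroup E\<^esub> dilate_action p E b"
    using bij a b by (simp add: unit_group_def BijGroup_def)
qed

text \<open>By the characterisation of unitary equivalence, its classes are the orbits of the
  dilation action, which Burnside's lemma counts.\<close>
lemma num_classes_burnside:
  assumes p: "prime p" and fin: "finite E"
    and E: "\<And>X. X \<in> E \<Longrightarrow> X \<subseteq> {..<p} \<and> card X = d"
    and zero: "\<And>X Y. X \<in> E \<Longrightarrow> Y \<in> E \<Longrightarrow> 0 \<in> X \<longleftrightarrow> 0 \<in> Y"
    and closed: "\<And>a X. a \<in> {1..<p} \<Longrightarrow> X \<in> E \<Longrightarrow> dilate p a X \<in> E"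
  shows "num_classes p d E * (p - 1) = (\<Sum>a\<in>{1..<p}. card {X \<in> E. dilate p a X = X})"
proof -
  define R where "R = {(J, K). J \<in> E \<and> K \<in> E \<and>
    unit_equiv d {..<p} (harm_frame p J) {..<p} (harm_frame p K)}"
  have action: "group_action (unit_group p) E (dilate_action p E)"
    using group_action_dilate[OF p _ closed] E by blast
  have "R `` {J} = orbit (unit_group p) (dilate_action p E) J" if J: "J \<in> E" for J
  proof -
    have "K \<in> R `` {J} \<longleftrightarrow> K \<in> E \<and> (\<exists>a. 0 < a \<and> a < p \<and> K = dilate p a J)" for K
    proof (cases "K \<in> E")
      case True
      then show ?thesis
        using unit_equiv_harm_frame_iff[OF p _ _ _ _ zero[OF J True]] E[OF J] E[OF True] J
        by (simp add: R_def)
    qed (simp add: R_def)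
    then show ?thesis
      unfolding orbit_def using J closed by (auto simp: unit_group_def dilate_action_def Suc_le_eq)
  qed
  then have "E // R = orbits (unit_group p) E (dilate_action p E)"
    unfolding quotient_def orbits_def by auto
  then have "num_classes p d E * (p - 1) = card (orbits (unit_group p) E (dilate_action p E)) *
      Coset.order (unit_group p)"
    by (simp add: num_classes_def R_def Coset.order_def unit_group_def)
  also have "\<dots> = (\<Sum>a\<in>carrier (unit_group p). card (invariants E (dilate_action p E) a))"
    by (rule group_action.burnside[OF action]) (use fin in \<open>auto simp: unit_group_def\<close>)
  also have "\<dots> = (\<Sum>a\<in>{1..<p}. card {X \<in> E. dilate p a X = X})"
    unfolding unit_group_def invariants_def dilate_action_def
    by (auto intro!: sum.cong arg_cong[of _ _ card])
  finally show ?thesis .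
qed

lemma sum_over_units_by_order:
  fixes F :: "nat \<Rightarrow> nat"
  assumes p: "prime p"
  shows "(\<Sum>a\<in>{1..<p}. F (ord p a)) = (\<Sum>j | j dvd p - 1. totient j * F j)"
proof -
  have p1: "p > 1" using prime_gt_1_nat[OF p] .
  have fin: "finite {j. j dvd p - 1}" by (rule finite_divisors_nat) (use p1 in simp)
  have "ord p a \<in> {j. j dvd p - 1}" if "a \<in> {1..<p}" for a
  proof -
    have "\<not> p dvd a" using that by (auto dest: dvd_imp_le)
    then have "[a ^ (p - 1) = 1] (mod p)" by (rule fermat_theorem[OF p])
    then show ?thesis using ord_divides'[of a "p - 1" p] by simp
  qed
  then have "(\<Sum>a\<in>{1..<p}. F (ord p a)) =
      (\<Sum>j | j dvd p - 1. \<Sum>a\<in>{a \<in> {1..<p}. ord p a = j}. F (ord p a))"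
    by (intro sum.group[OF _ fin, symmetric]) auto
  also have "\<dots> = (\<Sum>j | j dvd p - 1. card {a \<in> {1..<p}. ord p a = j} * F j)"
    by (intro sum.cong) auto
  also have "\<dots> = (\<Sum>j | j dvd p - 1. totient j * F j)"
  proof (intro sum.cong refl)
    fix j assume "j \<in> {j. j dvd p - 1}"
    moreover have "{a \<in> {1..<p}. ord p a = j} = {a \<in> totatives p. ord p a = j}"
      using totatives_prime[OF p] by auto
    ultimately show "card {a \<in> {1..<p}. ord p a = j} * F j = totient j * F j"
      using prime_card_elements_with_ord_eq_totient[OF p1 p, of j] by simp
  qed
  finally show ?thesis .
qed

lemma average_over_units:
  assumes p: "prime p"
    and N: "N * (p - 1) = (\<Sum>a\<in>{1..<p}.
      if ord p a dvd e then ((p - 1) div ord p a) choose (e div ord p a) else 0)"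
  shows "real N = (\<Sum>j | j dvd gcd (p - 1) e.
      real (((p - 1) div j) choose (e div j)) * real (totient j)) / real (p - 1)"
proof -
  have p1: "p > 1" using prime_gt_1_nat[OF p] .
  have fin: "finite {j. j dvd p - 1}" by (rule finite_divisors_nat) (use p1 in simp)
  define C where "C j = ((p - 1) div j) choose (e div j)" for j
  have "N * (p - 1) = (\<Sum>j | j dvd p - 1. totient j * (if j dvd e then C j else 0))"
    unfolding N C_def by (rule sum_over_units_by_order[OF p])
  also have "\<dots> = (\<Sum>j | j dvd p - 1. if j dvd e then C j * totient j else 0)"
    by (intro sum.cong) auto
  also have "\<dots> = (\<Sum>j\<in>{j \<in> {j. j dvd p - 1}. j dvd e}. C j * totient j)"
    by (rule sum.inter_filter[OF fin, symmetric])
  also have "{j \<in> {j. j dvd p - 1}. j dvd e} = {j. j dvd gcd (p - 1) e}" by auto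
  finally have "real N * real (p - 1) = (\<Sum>j | j dvd gcd (p - 1) e. real (C j) * real (totient j))"
    by (metis (mono_tags, lifting) of_nat_mult of_nat_sum sum.cong)
  then show ?thesis using p1 by (simp add: C_def field_simps)
qed

lemma dilate_mem_unlifted_sets:
  "prime p \<Longrightarrow> a \<in> {1..<p} \<Longrightarrow> X \<in> unlifted_sets p d \<Longrightarrow> dilate p a X \<in> unlifted_sets p d"
  using dilate_subset card_dilate zero_in_dilate_iff prime_gt_0_nat
  by (auto simp: unlifted_sets_def Suc_le_eq)

lemma dilate_mem_lifted_sets:
  "prime p \<Longrightarrow> a \<in> {1..<p} \<Longrightarrow> X \<in> lifted_sets p d \<Longrightarrow> dilate p a X \<in> lifted_sets p d"
  using dilate_subset card_dilate zero_in_dilate_iff prime_gt_0_nat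
  by (auto simp: lifted_sets_def Suc_le_eq)

lemma dilate_insert_0: "dilate p a (insert 0 X) = insert 0 (dilate p a X)"
  by (simp add: dilate_def)

lemma card_fixed_lifted_sets:
  assumes p: "prime p" and a: "0 < a" "a < p" and d: "d \<ge> 1"
  shows "card {X \<in> lifted_sets p d. dilate p a X = X} =
    card {Y \<in> unlifted_sets p (d - 1). dilate p a Y = Y}"
proof -
  have fixed_iff: "dilate p a (insert 0 Y) = insert 0 Y \<longleftrightarrow> dilate p a Y = Y"
    if "Y \<in> unlifted_sets p (d - 1)" for Y
    using that zero_in_dilate_iff[OF p a, of Y]
    by (auto simp: dilate_insert_0 unlifted_sets_def insert_ident)
  have "{X \<in> lifted_sets p d. dilate p a X = X} =
      insert 0 ` {Y \<in> unlifted_sets p (d - 1). dilate p a Y = Y}"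
  proof (intro equalityI subsetI)
    fix X assume X: "X \<in> {X \<in> lifted_sets p d. dilate p a X = X}"
    then have "X - {0} \<in> unlifted_sets p (d - 1)" "X = insert 0 (X - {0})"
      by (auto simp: lifted_sets_def unlifted_sets_def)
    then show "X \<in> insert 0 ` {Y \<in> unlifted_sets p (d - 1). dilate p a Y = Y}"
      using X fixed_iff by (metis (mono_tags, lifting) image_eqI mem_Collect_eq)
  next
    fix X assume "X \<in> insert 0 ` {Y \<in> unlifted_sets p (d - 1). dilate p a Y = Y}"
    then obtain Y where Y: "Y \<in> unlifted_sets p (d - 1)" "dilate p a Y = Y" "X = insert 0 Y" by blast
    moreover have "finite Y" using Y(1) finite_subset by (auto simp: unlifted_sets_def)
    ultimately show "X \<in> {X \<in> lifted_sets p d. dilate p a X = X}"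
      using fixed_iff d prime_gt_0_nat[OF p] by (auto simp: lifted_sets_def unlifted_sets_def)
  qed
  moreover have "inj_on (insert 0) {Y \<in> unlifted_sets p (d - 1). dilate p a Y = Y}"
    by (rule inj_onI) (auto simp: unlifted_sets_def insert_ident)
  ultimately show ?thesis by (simp add: card_image)
qed

lemma num_classes_unlifted_sets:
  assumes p: "prime p"
  shows "num_classes p d (unlifted_sets p d) * (p - 1) =
    (\<Sum>a\<in>{1..<p}. if ord p a dvd d then ((p - 1) div ord p a) choose (d div ord p a) else 0)"
proof -
  have "finite (unlifted_sets p d)"
    by (rule finite_subset[of _ "Pow {..<p}"]) (auto simp: unlifted_sets_def)
  then have "num_classes p d (unlifted_sets p d) * (p - 1) =
      (\<Sum>a\<in>{1..<p}. card {X \<in> unlifted_sets p d. dilate p a X = X})"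
  proof (rule num_classes_burnside[OF p])
    show "dilate p a X \<in> unlifted_sets p d" if "a \<in> {1..<p}" "X \<in> unlifted_sets p d" for a X
      using dilate_mem_unlifted_sets[OF p that] .
  qed (auto simp: unlifted_sets_def)
  also have "\<dots> = (\<Sum>a\<in>{1..<p}. if ord p a dvd d then ((p - 1) div ord p a) choose (d div ord p a) else 0)"
    by (intro sum.cong refl) (simp add: unlifted_sets_def conj_assoc card_dilate_fixed[OF p])
  finally show ?thesis .
qed

lemma num_classes_lifted_sets:
  assumes p: "prime p" and d: "d \<ge> 1"
  shows "num_classes p d (lifted_sets p d) * (p - 1) =
    (\<Sum>a\<in>{1..<p}. if ord p a dvd (d - 1) then ((p - 1) div ord p a) choose ((d - 1) div ord p a) else 0)"
proof -
  have "finite (lifted_sets p d)"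
    by (rule finite_subset[of _ "Pow {..<p}"]) (auto simp: lifted_sets_def)
  then have "num_classes p d (lifted_sets p d) * (p - 1) =
      (\<Sum>a\<in>{1..<p}. card {X \<in> lifted_sets p d. dilate p a X = X})"
  proof (rule num_classes_burnside[OF p])
    show "dilate p a X \<in> lifted_sets p d" if "a \<in> {1..<p}" "X \<in> lifted_sets p d" for a X
      using dilate_mem_lifted_sets[OF p that] .
  qed (auto simp: lifted_sets_def)
  also have "\<dots> = (\<Sum>a\<in>{1..<p}. card {X \<in> unlifted_sets p (d - 1). dilate p a X = X})"
    by (intro sum.cong refl) (simp add: card_fixed_lifted_sets[OF p _ _ d])
  also have "\<dots> = (\<Sum>a\<in>{1..<p}.
      if ord p a dvd (d - 1) then ((p - 1) div ord p a) choose ((d - 1) div ord p a) else 0)"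
    by (intro sum.cong refl) (simp add: unlifted_sets_def conj_assoc card_dilate_fixed[OF p])
  finally show ?thesis .
qed

theorem theorem7p2:
  fixes p d :: nat
  assumes "prime p" and "d \<ge> 1"
  shows "real (num_classes p d (unlifted_sets p d)) =
           (\<Sum>j | j dvd gcd (p - 1) d.
              real (((p - 1) div j) choose (d div j)) * real (totient j)) / real (p - 1) \<and>
         (d > 1 \<longrightarrow> real (num_classes p d (lifted_sets p d)) =
           (\<Sum>j | j dvd gcd (p - 1) (d - 1).
              real (((p - 1) div j) choose ((d - 1) div j)) * real (totient j)) / real (p - 1))"
  using average_over_units[OF assms(1) num_classes_unlifted_sets[OF assms(1)]]
    average_over_units[OF assms(1) num_classes_lifted_sets[OF assms]]
  by blast

end
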